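(* Let $n\ge 2$, $k\ge 1$, $i_1,\dots,i_k\in\{1,\dots,n-1\}$ and $a_1,\dots,a_k\in\mathbb{Z}$. Then $$V_n(x_{i_1}^{a_1}x_{i_2}^{a_2}\cdots x_{i_k}^{a_k})(s)=\frac{1}{(s^2+1)^k}\sum_{(j_1,\dots,j_k)\in\{0,1\}^k}P^{[a_1]}_{j_1}(s)\cdots P^{[a_k]}_{j_k}(s)\,V_n(x_{i_1}^{j_1}\cdots x_{i_k}^{j_k})(s),$$ where for $a\in\mathbb{Z}$, $P_0^{[a]}(s)=s^{3a}+(-1)^a s^{a+2}$ and $P_1^{[a]}(s)=s^{3a-1}+(-1)^{a+1}s^{a-1}$ (Laurent polynomials in $s$).
   Context: $\mathcal{B}_n$ is the Artin braid group on $n$ strands with standard generators $x_1,\dots,x_{n-1}$ ($x_i$ crosses strands $i$ and $i+1$); $\widehat{\beta}$ denotes the closure of $\beta\in\mathcal{B}_n$, an oriented link. The Jones polynomial $V_L$ of an oriented link $L$ is the Laurent polynomial in $q^{1/2}$ with value $1$ on the unknot satisfying $q^{-1}V_{L_+}-qV_{L_-}=(q^{1/2}-q^{-1/2})V_{L_0}$. One substitutes $s=q^{-1/2}$, so Jones polynomials are Laurent polynomials in $s$. For $\beta\in\mathcal{B}_n$, $V_n(\beta)=V(\widehat{\beta})$. Crossing conventions are those for which, in a braid word, the closures of $\alpha x_i^{e+2}\gamma$, $\alpha x_i^{e+1}\gamma$, $\alpha x_i^{e}\gamma$ play the roles of $L_-,L_0,L_+$ respectively (e.g. $V_2(x_1^2)=-s-s^5$).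 *)

theory Defs
  imports "HOL-Analysis.Analysis"
begin

text \<open>A braid word in the standard generators: a list of pairs (i, a) standing for
  the factor x_i^a.  The word [(i1,a1),...,(ik,ak)] is x_i1^a1 ... x_ik^ak.\<close>
type_synonym braid_word = "(nat \<times> int) list"

definition braid_letters :: "braid_word \<Rightarrow> (nat \<times> int) list" where
  "braid_letters w = concat (map (\<lambda>(i, a). replicate (nat \<bar>a\<bar>) (i, sgn a)) w)"

text \<open>Kauffman states: one boolean per letter (True = horizontal smoothing e_i,
  False = vertical smoothing).  Nodes of the closed diagram: (level, strand position);
  letter t joins level t to level (t+1) mod m (closure).\<close>
definition state_edges :: "nat \<Rightarrow> (nat \<times> int) list \<Rightarrow> bool list \<Rightarrow> ((nat \<times> nat) \<times> (nat \<times> nat)) set" where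
  "state_edges n ls bs = (\<Union>t<length ls.
     (let i = fst (ls ! t); t' = Suc t mod length ls in
      if bs ! t then
        {((t, p), (t', p)) | p. p \<in> {1..n} - {i, Suc i}} \<union>
        {((t, i), (t, Suc i)), ((t', i), (t', Suc i))}
      else {((t, p), (t', p)) | p. p \<in> {1..n}}))"

definition state_nodes :: "nat \<Rightarrow> (nat \<times> int) list \<Rightarrow> (nat \<times> nat) set" where
  "state_nodes n ls = {0..<max 1 (length ls)} \<times> {1..n}"

definition state_loops :: "nat \<Rightarrow> (nat \<times> int) list \<Rightarrow> bool list \<Rightarrow> nat" where
  "state_loops n ls bs =
     card (state_nodes n ls // ((state_edges n ls bs \<union> (state_edges n ls bs)\<inverse>)\<^sup>*))"

text \<open>Jones polynomial of the closure of a braid word, evaluated at s (s = q^(-1/2)), via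
  the Kauffman bracket state sum: with A^2 = s, a letter x_i^e (e = +-1, a crossing of sign -e)
  gets weight A^e (vertical) or A^-e (horizontal); multiplying by (-A^3)^(-writhe) and
  normalising by the loop value d = -A^2 - A^-2 = -s - 1/s gives the formula below.\<close>
definition jones_braid :: "nat \<Rightarrow> braid_word \<Rightarrow> real \<Rightarrow> real" where
  "jones_braid n w s =
     (let ls = braid_letters w; m = length ls; d = - s - inverse s in
      (-1) powi (\<Sum>t<m. snd (ls ! t)) *
      (\<Sum>bs \<in> {bs. length bs = m}.
         (\<Prod>t<m. if bs ! t then s powi (2 * snd (ls ! t)) else s powi (snd (ls ! t)))
         * d ^ (state_loops n ls bs - 1)))"

definition P0 :: "int \<Rightarrow> real \<Rightarrow> real" where
  "P0 a s = s powi (3 * a) + (-1) powi a * s powi (a + 2)"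

definition P1 :: "int \<Rightarrow> real \<Rightarrow> real" where
  "P1 a s = s powi (3 * a - 1) + (-1) powi (a + 1) * s powi (a - 1)"

definition Pj :: "int \<Rightarrow> nat \<Rightarrow> real \<Rightarrow> real" where
  "Pj a j s = (if j = 0 then P0 a s else P1 a s)"


end

theory Submission
  imports Defs
begin

text \<open>The Jones polynomial of a closed braid is a Kauffman state sum in which every crossing
  x_i^(+-1) carries a pair of weights, one for each of its two smoothings.  Deleting a vertically
  smoothed crossing does not change the loops, and horizontal smoothings of two adjacent crossings
  on the same strands close off one extra loop.  Hence a block x_i^a collapses to a single crossing
  whose weight pair is the |a|-th power of the crossing weight in the algebra
  (v, h)(v', h') = (vv', vh' + hv' + hh'd).  That power has a closed form, from which
  (s^2 + 1) times the weight pair of x_i^a is P_0^[a] times that of x_i^0 plus P_1^[a] times that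
  of x_i^1.  As the state sum is multilinear in the weights of the crossings, expanding every block
  in this way gives the formula.\<close>

section \<open>Components of a graph under a quotient map\<close>

definition component_rel :: "('a \<times> 'a) set \<Rightarrow> ('a \<times> 'a) set" where
  "component_rel E = (E \<union> E\<inverse>)\<^sup>*"

lemma equiv_component_rel: "equiv UNIV (component_rel E)"
  unfolding component_rel_def equiv_def refl_on_def
  by (simp add: sym_rtrancl sym_Un_converse trans_rtrancl)

lemma component_rel_refl [simp]: "(a, a) \<in> component_rel E"
  unfolding component_rel_def by simp

lemma component_rel_edge:
  "(a, b) \<in> E \<Longrightarrow> (a, b) \<in> component_rel E"
  "(a, b) \<in> E \<Longrightarrow> (b, a) \<in> component_rel E"
  unfolding component_rel_def by auto

lemma component_rel_sym: "(a, b) \<in> component_rel E \<Longrightarrow> (b, a) \<in> component_rel E"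
  using equiv_component_rel[of E] unfolding equiv_def sym_def by blast

lemma component_rel_trans:
  "(a, b) \<in> component_rel E \<Longrightarrow> (b, c) \<in> component_rel E \<Longrightarrow> (a, c) \<in> component_rel E"
  unfolding component_rel_def by simp

lemma component_rel_if_doubleton_edge:
  "(x, y) \<in> E \<Longrightarrow> {a, c} = {x, y} \<Longrightarrow> (a, c) \<in> component_rel E"
  by (auto simp: doubleton_eq_iff intro: component_rel_edge)

lemma card_image_eq_if_same_fibres:
  assumes "\<forall>x\<in>V. \<forall>y\<in>V. f x = f y \<longleftrightarrow> g x = g y"
  shows "card (f ` V) = card (g ` V)"
proof -
  have "bij_betw (\<lambda>z. g (inv_into V f z)) (f ` V) (g ` V)"
    unfolding bij_betw_def inj_on_def
  proof (intro conjI ballI impI)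
    fix x y assume x: "x \<in> f ` V" and y: "y \<in> f ` V"
      and eq: "g (inv_into V f x) = g (inv_into V f y)"
    then have "f (inv_into V f x) = f (inv_into V f y)"
      using assms inv_into_into by (metis (no_types, lifting))
    then show "x = y" using x y by (simp add: f_inv_into_f)
  next
    show "(\<lambda>z. g (inv_into V f z)) ` f ` V = g ` V"
    proof
      show "(\<lambda>z. g (inv_into V f z)) ` f ` V \<subseteq> g ` V" by (auto intro: inv_into_into)
      show "g ` V \<subseteq> (\<lambda>z. g (inv_into V f z)) ` f ` V"
      proof
        fix z assume "z \<in> g ` V"
        then obtain x where x: "x \<in> V" "z = g x" by auto
        have "f (inv_into V f (f x)) = f x" using x by (simp add: f_inv_into_f)
        then have "g (inv_into V f (f x)) = g x" using assms x inv_into_into[of "f x" f V] by blast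
        then show "z \<in> (\<lambda>z. g (inv_into V f z)) ` f ` V" using x by force
      qed
    qed
  qed
  then show ?thesis by (rule bij_betw_same_card)
qed

lemma component_rel_map:
  assumes edge_map: "\<And>a b. (a, b) \<in> E \<Longrightarrow> (\<Phi> a, \<Phi> b) \<in> component_rel E'"
    and "(x, y) \<in> component_rel E"
  shows "(\<Phi> x, \<Phi> y) \<in> component_rel E'"
proof -
  from assms(2) have "(x, y) \<in> (E \<union> E\<inverse>)\<^sup>*" by (simp add: component_rel_def)
  then show ?thesis
  proof (induction rule: rtrancl_induct)
    case (step y z)
    from step.hyps(2) have "(\<Phi> y, \<Phi> z) \<in> component_rel E'"
      using edge_map[of y z] edge_map[of z y] component_rel_sym[of "\<Phi> z" "\<Phi> y" E'] by blast
    with step.IH show ?case by (rule component_rel_trans)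
  qed simp
qed

lemma component_rel_lift:
  assumes edge_lift: "\<And>u v. (u, v) \<in> E' \<Longrightarrow>
      \<exists>a\<in>V. \<exists>b\<in>V. \<Phi> a = u \<and> \<Phi> b = v \<and> (a, b) \<in> component_rel E"
    and fibre: "\<And>a b. a \<in> V \<Longrightarrow> b \<in> V \<Longrightarrow> \<Phi> a = \<Phi> b \<Longrightarrow> (a, b) \<in> component_rel E"
    and x: "x \<in> V" and y: "y \<in> V" and "(\<Phi> x, \<Phi> y) \<in> component_rel E'"
  shows "(x, y) \<in> component_rel E"
proof -
  have lift: "\<exists>a\<in>V. \<exists>b\<in>V. \<Phi> a = u \<and> \<Phi> b = v \<and> (a, b) \<in> component_rel E"
    if "(u, v) \<in> E' \<union> E'\<inverse>" for u v
  proof (cases "(u, v) \<in> E'")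
    case False
    with that have "(v, u) \<in> E'" by simp
    then obtain a b where "a \<in> V" "b \<in> V" "\<Phi> a = v" "\<Phi> b = u" "(a, b) \<in> component_rel E"
      using edge_lift by blast
    then show ?thesis using component_rel_sym[of a b E] by blast
  qed (rule edge_lift)
  have reach: "\<forall>y\<in>V. \<Phi> y = w \<longrightarrow> (x, y) \<in> component_rel E"
    if "(\<Phi> x, w) \<in> (E' \<union> E'\<inverse>)\<^sup>*" for w
    using that
  proof (induction rule: rtrancl_induct)
    case base
    show ?case using fibre[OF x] by simp
  next
    case (step w v)
    obtain a b where ab: "a \<in> V" "b \<in> V" "\<Phi> a = w" "\<Phi> b = v" "(a, b) \<in> component_rel E"
      using lift[OF step.hyps(2)] by blast
    have "(x, a) \<in> component_rel E" using step.IH ab(1,3) by blast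
    then have xb: "(x, b) \<in> component_rel E" using ab(5) by (rule component_rel_trans)
    show ?case
    proof (intro ballI impI)
      fix y assume "y \<in> V" "\<Phi> y = v"
      then have "(b, y) \<in> component_rel E" using fibre ab(2,4) by simp
      with xb show "(x, y) \<in> component_rel E" by (rule component_rel_trans)
    qed
  qed
  then show ?thesis using reach[of "\<Phi> y"] assms(5) y unfolding component_rel_def by blast
qed

lemma card_components_eq_if_map:
  assumes surj: "\<Phi> ` V = V'"
    and edge_map: "\<And>a b. (a, b) \<in> E \<Longrightarrow> (\<Phi> a, \<Phi> b) \<in> component_rel E'"
    and edge_lift: "\<And>u v. (u, v) \<in> E' \<Longrightarrow>
      \<exists>a\<in>V. \<exists>b\<in>V. \<Phi> a = u \<and> \<Phi> b = v \<and> (a, b) \<in> component_rel E"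
    and fibre: "\<And>a b. a \<in> V \<Longrightarrow> b \<in> V \<Longrightarrow> \<Phi> a = \<Phi> b \<Longrightarrow> (a, b) \<in> component_rel E"
  shows "card (V // component_rel E) = card (V' // component_rel E')"
proof -
  have "V // component_rel E = (\<lambda>x. component_rel E `` {x}) ` V"
    and "V' // component_rel E' = (\<lambda>x. component_rel E' `` {\<Phi> x}) ` V"
    unfolding quotient_def surj[symmetric] by auto
  moreover have "card ((\<lambda>x. component_rel E `` {x}) ` V) =
      card ((\<lambda>x. component_rel E' `` {\<Phi> x}) ` V)"
  proof (rule card_image_eq_if_same_fibres, intro ballI)
    fix x y assume x: "x \<in> V" and y: "y \<in> V"
    have "(\<Phi> x, \<Phi> y) \<in> component_rel E' \<longleftrightarrow> (x, y) \<in> component_rel E"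
    proof
      assume "(\<Phi> x, \<Phi> y) \<in> component_rel E'"
      with edge_lift fibre x y show "(x, y) \<in> component_rel E" by (rule component_rel_lift)
    qed (rule component_rel_map[OF edge_map])
    then show "component_rel E `` {x} = component_rel E `` {y} \<longleftrightarrow>
        component_rel E' `` {\<Phi> x} = component_rel E' `` {\<Phi> y}"
      by (simp add: eq_equiv_class_iff[OF equiv_component_rel])
  qed
  ultimately show ?thesis by simp
qed

lemma card_quotient_remove_class:
  assumes eq: "equiv UNIV R" and "finite V" "c \<in> V" "R `` {c} \<subseteq> V"
  shows "card (V // R) = card ((V - R `` {c}) // R) + 1"
proof -
  have "V // R = insert (R `` {c}) ((V - R `` {c}) // R)"
    unfolding quotient_def using assms(3,4) eq_equiv_class_iff[OF eq] by auto
  moreover have "R `` {c} \<notin> (V - R `` {c}) // R"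
    unfolding quotient_def using eq_equiv_class_iff[OF eq, of c] by auto
  moreover have "finite ((V - R `` {c}) // R)"
    unfolding quotient_def using assms(2) by auto
  ultimately show ?thesis by simp
qed

section \<open>Loops of a smoothed closed braid\<close>

lemma state_loops_eq:
  "state_loops n ls bs = card (state_nodes n ls // component_rel (state_edges n ls bs))"
  unfolding state_loops_def component_rel_def by simp

definition letter_edges ::
  "nat \<Rightarrow> nat \<Rightarrow> bool \<Rightarrow> nat \<Rightarrow> nat \<Rightarrow> ((nat \<times> nat) \<times> (nat \<times> nat)) set" where
  "letter_edges n i b t t' = (if b then
        {((t, p), (t', p)) | p. p \<in> {1..n} - {i, Suc i}} \<union>
        {((t, i), (t, Suc i)), ((t', i), (t', Suc i))}
      else {((t, p), (t', p)) | p. p \<in> {1..n}})"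

lemma state_edges_eq:
  "state_edges n ls bs =
    (\<Union>u<length ls. letter_edges n (fst (ls ! u)) (bs ! u) u (Suc u mod length ls))"
  unfolding state_edges_def letter_edges_def Let_def by simp

lemma letter_edges_apfst:
  "map_prod (apfst f) (apfst f) ` letter_edges n i b t t' = letter_edges n i b (f t) (f t')"
  unfolding letter_edges_def by (auto simp: image_iff)

definition valid_letters :: "nat \<Rightarrow> (nat \<times> int) list \<Rightarrow> bool" where
  "valid_letters n ls \<longleftrightarrow> (\<forall>x\<in>set ls. 1 \<le> fst x \<and> Suc (fst x) \<le> n)"

lemma valid_letters_simps [simp]:
  "valid_letters n [] = True"
  "valid_letters n (x # ls) \<longleftrightarrow> 1 \<le> fst x \<and> Suc (fst x) \<le> n \<and> valid_letters n ls"
  "valid_letters n (ls @ ls') \<longleftrightarrow> valid_letters n ls \<and> valid_letters n ls'"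
  by (auto simp: valid_letters_def)

lemma state_edges_in_nodes:
  assumes "valid_letters n ls" "(a, c) \<in> state_edges n ls bs"
  shows "a \<in> state_nodes n ls \<and> c \<in> state_nodes n ls"
proof -
  obtain u where u: "u < length ls"
    and ac: "(a, c) \<in> letter_edges n (fst (ls ! u)) (bs ! u) u (Suc u mod length ls)"
    using assms(2) unfolding state_edges_eq by blast
  have "1 \<le> fst (ls ! u)" "Suc (fst (ls ! u)) \<le> n"
    using assms(1) u nth_mem unfolding valid_letters_def by blast+
  moreover have "Suc u mod length ls < length ls" using u by (auto intro: mod_less_divisor)
  ultimately show ?thesis
    using ac u unfolding letter_edges_def state_nodes_def by (auto split: if_splits)
qed

lemma state_loops_ge_1:
  assumes "1 \<le> n" shows "1 \<le> state_loops n ls bs"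
proof -
  have "(0, 1) \<in> state_nodes n ls" using assms by (simp add: state_nodes_def)
  then show ?thesis
    unfolding state_loops_eq state_nodes_def quotient_def by (auto simp: Suc_le_eq card_gt_0_iff)
qed

lemma state_loops_cong_fst:
  assumes "map fst ls = map fst ls'"
  shows "state_loops n ls bs = state_loops n ls' bs"
proof -
  have len: "length ls = length ls'" using assms by (metis length_map)
  have "fst (ls ! u) = fst (ls' ! u)" if "u < length ls" for u
    using assms that len by (metis nth_map)
  then show ?thesis
    unfolding state_loops_def state_edges_eq state_nodes_def len by simp
qed

text \<open>Level relabelling after deleting the letter at position \<open>r\<close> of a word of length \<open>m\<close>:
  the levels \<open>r\<close> and \<open>r + 1 mod m\<close> become one.  \<open>skip_level r\<close> is the new position of
  the letter at any other position.\<close>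

definition merge_level :: "nat \<Rightarrow> nat \<Rightarrow> nat \<Rightarrow> nat" where
  "merge_level m r l = (if l \<le> r then l else l - 1) mod (m - 1)"

definition skip_level :: "nat \<Rightarrow> nat \<Rightarrow> nat" where
  "skip_level r u = (if u < r then u else u - 1)"

lemma merge_level_other:
  assumes "r < m" "u < m" "u \<noteq> r"
  shows "skip_level r u < m - 1" "merge_level m r u = skip_level r u"
    "merge_level m r (Suc u mod m) = Suc (skip_level r u) mod (m - 1)"
proof -
  show less: "skip_level r u < m - 1" using assms by (auto simp: skip_level_def)
  then show "merge_level m r u = skip_level r u"
    using assms by (auto simp: merge_level_def skip_level_def)
  show "merge_level m r (Suc u mod m) = Suc (skip_level r u) mod (m - 1)"
  proof (cases "Suc u < m")
    case False
    then have "Suc u = m" using assms by simp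
    then show ?thesis using assms by (auto simp: merge_level_def skip_level_def)
  qed (use assms in \<open>auto simp: merge_level_def skip_level_def\<close>)
qed

lemma merge_level_Suc:
  assumes "r < m" shows "merge_level m r (Suc r mod m) = merge_level m r r"
proof (cases "Suc r < m")
  case False
  then have "m = Suc r" using assms by simp
  then show ?thesis by (simp add: merge_level_def)
qed (simp add: merge_level_def)

lemma skip_level_surj: "r < m \<Longrightarrow> l < m - 1 \<Longrightarrow> \<exists>u<m. u \<noteq> r \<and> skip_level r u = l"
  by (intro exI[of _ "if l < r then l else Suc l"]) (auto simp: skip_level_def)

lemma merge_level_less: "l < m \<Longrightarrow> merge_level m r l < max 1 (m - 1)"
  by (cases "m - 1 = 0") (auto simp: merge_level_def)

lemma merge_level_eq_iff:
  assumes "r < m" "l1 < m" "l2 < m" "l1 \<noteq> l2"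
  shows "merge_level m r l1 = merge_level m r l2 \<longleftrightarrow> {l1, l2} = {r, Suc r mod m}"
proof (cases "Suc r < m")
  case True
  then have "merge_level m r l = (if l \<le> r then l else l - 1)" if "l < m" for l
    using that by (auto simp: merge_level_def)
  moreover have "Suc r mod m = Suc r" using True by simp
  ultimately show ?thesis using assms by (auto simp: doubleton_eq_iff)
next
  case False
  then have m: "m = Suc r" using assms by simp
  then have "merge_level m r l = (if l = r then 0 else l)" if "l < m" for l
    using that by (auto simp: merge_level_def)
  then show ?thesis using assms m by (auto simp: doubleton_eq_iff)
qed
lemma apfst_merge_level_image_other:
  assumes "r < m" "2 \<le> m"
  shows "apfst (merge_level m r) ` (({0..<m} - {r}) \<times> {1..n}) = {0..<max 1 (m - 1)} \<times> {1..n}"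
proof
  show "apfst (merge_level m r) ` (({0..<m} - {r}) \<times> {1..n}) \<subseteq> {0..<max 1 (m - 1)} \<times> {1..n}"
    using merge_level_less by auto
  show "{0..<max 1 (m - 1)} \<times> {1..n} \<subseteq> apfst (merge_level m r) ` (({0..<m} - {r}) \<times> {1..n})"
  proof
    fix x assume x: "x \<in> {0..<max 1 (m - 1)} \<times> {1..n}"
    then obtain u where u: "u < m" "u \<noteq> r" "skip_level r u = fst x"
      using skip_level_surj[OF assms(1)] assms(2) by fastforce
    then have "apfst (merge_level m r) (u, snd x) = x"
      using merge_level_other[OF assms(1) u(1,2)] by (simp add: apfst_def map_prod_def split_beta)
    then show "x \<in> apfst (merge_level m r) ` (({0..<m} - {r}) \<times> {1..n})"
      using u x by force
  qed
qed

lemma apfst_merge_level_image: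
  assumes "r < m"
  shows "apfst (merge_level m r) ` ({0..<m} \<times> {1..n}) = {0..<max 1 (m - 1)} \<times> {1..n}"
proof (cases "2 \<le> m")
  case True
  have "apfst (merge_level m r) ` ({0..<m} \<times> {1..n}) \<subseteq> {0..<max 1 (m - 1)} \<times> {1..n}"
    using merge_level_less by auto
  then show ?thesis using apfst_merge_level_image_other[OF assms True, of n] by blast
next
  case False
  then have "m = 1" "r = 0" using assms by auto
  then show ?thesis by (force simp: merge_level_def)
qed

lemma apfst_merge_level_image_diff:
  assumes "r < m" "2 \<le> m" "C \<subseteq> {r} \<times> {1..n}"
  shows "apfst (merge_level m r) ` ({0..<m} \<times> {1..n} - C) = {0..<max 1 (m - 1)} \<times> {1..n}"
proof -
  have "({0..<m} - {r}) \<times> {1..n} \<subseteq> {0..<m} \<times> {1..n} - C" using assms(3) by auto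
  then have "apfst (merge_level m r) ` (({0..<m} - {r}) \<times> {1..n}) \<subseteq>
      apfst (merge_level m r) ` ({0..<m} \<times> {1..n} - C)"
    by (rule image_mono)
  moreover have "apfst (merge_level m r) ` ({0..<m} \<times> {1..n} - C) \<subseteq>
      apfst (merge_level m r) ` ({0..<m} \<times> {1..n})"
    by (rule image_mono) blast
  ultimately show ?thesis
    unfolding apfst_merge_level_image_other[OF assms(1,2)] apfst_merge_level_image[OF assms(1)]
    by (metis subset_antisym)
qed

lemma apfst_merge_level_eq:
  assumes "r < m" "fst a < m" "fst c < m" "apfst (merge_level m r) a = apfst (merge_level m r) c" "a \<noteq> c"
  shows "{a, c} = {(r, snd a), (Suc r mod m, snd a)}"
proof -
  obtain l1 p l2 p' where lp: "a = (l1, p)" "c = (l2, p')" by fastforce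
  then have "p' = p" "l1 \<noteq> l2" using assms(4,5) by auto
  then have "{l1, l2} = {r, Suc r mod m}"
    using merge_level_eq_iff[OF assms(1)] assms(2-4) lp by auto
  then show ?thesis using lp \<open>p' = p\<close> by (auto simp: doubleton_eq_iff)
qed

definition other_letter_edges ::
  "nat \<Rightarrow> (nat \<times> int) list \<Rightarrow> bool list \<Rightarrow> nat \<Rightarrow> ((nat \<times> nat) \<times> (nat \<times> nat)) set" where
  "other_letter_edges n ls bs r = (\<Union>u\<in>{u. u < length ls \<and> u \<noteq> r}.
     letter_edges n (fst (ls ! u)) (bs ! u) u (Suc u mod length ls))"

lemma state_edges_split:
  "r < length ls \<Longrightarrow> state_edges n ls bs =
    other_letter_edges n ls bs r \<union> letter_edges n (fst (ls ! r)) (bs ! r) r (Suc r mod length ls)"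
  unfolding state_edges_eq other_letter_edges_def by auto

lemma other_letter_edges_subset: "other_letter_edges n ls bs r \<subseteq> state_edges n ls bs"
  unfolding state_edges_eq other_letter_edges_def by auto

lemma state_edges_delete_letter:
  assumes "length bA = length A" "length bB = length B"
    and m: "m = length (A @ z # B)" and r: "r = length A"
  shows "state_edges n (A @ B) (bA @ bB) =
    map_prod (apfst (merge_level m r)) (apfst (merge_level m r)) `
      other_letter_edges n (A @ z # B) (bA @ b # bB) r"
proof -
  have rm: "r < m" using m r by simp
  have nth: "(A @ z # B) ! u = (A @ B) ! skip_level r u" "(bA @ b # bB) ! u = (bA @ bB) ! skip_level r u"
    if "u < m" "u \<noteq> r" for u
    using that assms by (auto simp: skip_level_def nth_append)
  have skip: "skip_level r ` {u. u < m \<and> u \<noteq> r} = {..<m - 1}"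
    using merge_level_other(1)[OF rm] skip_level_surj[OF rm] by (auto simp: image_iff)
  have "map_prod (apfst (merge_level m r)) (apfst (merge_level m r)) `
      other_letter_edges n (A @ z # B) (bA @ b # bB) r =
    (\<Union>u\<in>{u. u < m \<and> u \<noteq> r}. letter_edges n (fst ((A @ B) ! skip_level r u))
      ((bA @ bB) ! skip_level r u) (skip_level r u) (Suc (skip_level r u) mod (m - 1)))"
    unfolding other_letter_edges_def image_UN letter_edges_apfst m[symmetric]
  proof (rule SUP_cong[OF refl])
    fix u assume "u \<in> {u. u < m \<and> u \<noteq> r}"
    then have u: "u < m" "u \<noteq> r" by auto
    show "letter_edges n (fst ((A @ z # B) ! u)) ((bA @ b # bB) ! u)
        (merge_level m r u) (merge_level m r (Suc u mod m)) =
      letter_edges n (fst ((A @ B) ! skip_level r u)) ((bA @ bB) ! skip_level r u)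
        (skip_level r u) (Suc (skip_level r u) mod (m - 1))"
      unfolding nth[OF u] merge_level_other[OF rm u] ..
  qed
  also have "\<dots> = (\<Union>u<m - 1. letter_edges n (fst ((A @ B) ! u)) ((bA @ bB) ! u) u (Suc u mod (m - 1)))"
    unfolding skip[symmetric] by simp
  also have "\<dots> = state_edges n (A @ B) (bA @ bB)"
    unfolding state_edges_eq using m by simp
  finally show ?thesis by simp
qed

lemma state_edges_delete_letter_image:
  assumes "length bA = length A" "length bB = length B"
    and "(a, c) \<in> other_letter_edges n (A @ z # B) (bA @ b # bB) (length A)"
  shows "(apfst (merge_level (length (A @ z # B)) (length A)) a,
      apfst (merge_level (length (A @ z # B)) (length A)) c) \<in> state_edges n (A @ B) (bA @ bB)"
  unfolding state_edges_delete_letter[OF assms(1,2) refl refl, where z = z and b = b]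
  using assms(3) by (intro rev_image_eqI) auto

lemma state_edges_delete_letter_lift:
  assumes "length bA = length A" "length bB = length B" "valid_letters n (A @ z # B)"
    and "(u, v) \<in> state_edges n (A @ B) (bA @ bB)"
  obtains a c where "(a, c) \<in> other_letter_edges n (A @ z # B) (bA @ b # bB) (length A)"
    "a \<in> state_nodes n (A @ z # B)" "c \<in> state_nodes n (A @ z # B)"
    "u = apfst (merge_level (length (A @ z # B)) (length A)) a"
    "v = apfst (merge_level (length (A @ z # B)) (length A)) c"
proof -
  obtain a c where ac: "(a, c) \<in> other_letter_edges n (A @ z # B) (bA @ b # bB) (length A)"
    "u = apfst (merge_level (length (A @ z # B)) (length A)) a"
    "v = apfst (merge_level (length (A @ z # B)) (length A)) c"
    using assms(4) unfolding state_edges_delete_letter[OF assms(1,2) refl refl, where z = z and b = b] by auto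
  moreover have "a \<in> state_nodes n (A @ z # B)" "c \<in> state_nodes n (A @ z # B)"
    using state_edges_in_nodes[OF assms(3)] other_letter_edges_subset ac(1) by blast+
  ultimately show ?thesis using that by blast
qed

lemma state_loops_delete_vertical:
  assumes lengths: "length bA = length A" "length bB = length B"
    and valid: "valid_letters n (A @ z # B)"
  shows "state_loops n (A @ z # B) (bA @ False # bB) = state_loops n (A @ B) (bA @ bB)"
proof -
  define ls bs m r where "ls = A @ z # B" and "bs = bA @ False # bB"
    and "m = length ls" and "r = length A"
  define \<Phi> :: "nat \<times> nat \<Rightarrow> nat \<times> nat" where "\<Phi> = apfst (merge_level m r)"
  define E where "E = state_edges n ls bs"
  have rm: "r < m" unfolding r_def m_def ls_def by simp
  have "letter_edges n (fst (ls ! r)) (bs ! r) r (Suc r mod m) =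
      {((r, p), (Suc r mod m, p)) | p. p \<in> {1..n}}"
    unfolding bs_def r_def letter_edges_def using lengths by (simp add: nth_append)
  then have split: "E = other_letter_edges n ls bs r \<union> {((r, p), (Suc r mod m, p)) | p. p \<in> {1..n}}"
    using state_edges_split[of r ls n bs] rm unfolding E_def m_def by simp
  have nodes: "state_nodes n ls = {0..<m} \<times> {1..n}"
    "state_nodes n (A @ B) = {0..<max 1 (m - 1)} \<times> {1..n}"
    unfolding state_nodes_def m_def ls_def by simp_all
  have "card (state_nodes n ls // component_rel E) =
      card (state_nodes n (A @ B) // component_rel (state_edges n (A @ B) (bA @ bB)))"
  proof (rule card_components_eq_if_map)
    show "\<Phi> ` state_nodes n ls = state_nodes n (A @ B)"
      unfolding nodes \<Phi>_def by (rule apfst_merge_level_image[OF rm])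
  next
    fix a c assume "(a, c) \<in> E"
    then consider "(a, c) \<in> other_letter_edges n ls bs r" | p where "a = (r, p)" "c = (Suc r mod m, p)"
      unfolding split by blast
    then show "(\<Phi> a, \<Phi> c) \<in> component_rel (state_edges n (A @ B) (bA @ bB))"
    proof cases
      case 1
      then show ?thesis
        unfolding \<Phi>_def m_def r_def ls_def bs_def
        by (intro component_rel_edge(1) state_edges_delete_letter_image[OF lengths])
    qed (simp add: \<Phi>_def merge_level_Suc[OF rm])
  next
    fix u v assume "(u, v) \<in> state_edges n (A @ B) (bA @ bB)"
    from state_edges_delete_letter_lift[OF lengths valid this, of False]
    obtain a c where "(a, c) \<in> other_letter_edges n ls bs r" "a \<in> state_nodes n ls"
      "c \<in> state_nodes n ls" "u = \<Phi> a" "v = \<Phi> c"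
      unfolding \<Phi>_def m_def r_def ls_def bs_def .
    moreover from this have "(a, c) \<in> E" using other_letter_edges_subset unfolding E_def by blast
    ultimately show "\<exists>a\<in>state_nodes n ls. \<exists>b\<in>state_nodes n ls. \<Phi> a = u \<and> \<Phi> b = v \<and>
        (a, b) \<in> component_rel E"
      using component_rel_edge(1)[of a c E] by blast
  next
    fix a c assume a: "a \<in> state_nodes n ls" and c: "c \<in> state_nodes n ls" and eq: "\<Phi> a = \<Phi> c"
    show "(a, c) \<in> component_rel E"
    proof (cases "a = c")
      case False
      with a c eq have "{a, c} = {(r, snd a), (Suc r mod m, snd a)}"
        unfolding nodes \<Phi>_def by (intro apfst_merge_level_eq[OF rm]) auto
      moreover have "((r, snd a), (Suc r mod m, snd a)) \<in> E"
        using a unfolding split nodes by auto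
      ultimately show ?thesis by (rule component_rel_if_doubleton_edge[rotated])
    qed simp
  qed
  then show ?thesis
    unfolding state_loops_eq E_def ls_def bs_def .
qed

lemma state_edges_touching_cap:
  assumes r: "0 < r" "r < length ls" and horizontal: "bs ! (r - 1)" "bs ! r"
    and index: "fst (ls ! (r - 1)) = i" "fst (ls ! r) = i"
    and edge: "(a, c) \<in> state_edges n ls bs"
    and touching: "a \<in> {(r, i), (r, Suc i)} \<or> c \<in> {(r, i), (r, Suc i)}"
  shows "(a, c) = ((r, i), (r, Suc i))"
proof -
  define m where "m = length ls"
  obtain u where u: "u < m" and ac: "(a, c) \<in> letter_edges n (fst (ls ! u)) (bs ! u) u (Suc u mod m)"
    using edge unfolding state_edges_eq m_def by blast
  have "fst a \<in> {u, Suc u mod m} \<and> fst c \<in> {u, Suc u mod m}"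
    using ac unfolding letter_edges_def by (auto split: if_splits)
  moreover have "fst a = r \<or> fst c = r" using touching by auto
  ultimately consider "u = r" | "Suc u mod m = r" by auto
  then show ?thesis
  proof cases
    case 1
    have "Suc r mod m \<noteq> r"
    proof (cases "Suc r < m")
      case False
      then have "m = Suc r" using r unfolding m_def by simp
      with r show ?thesis by simp
    qed simp
    then show ?thesis using ac horizontal(2) index(2) touching 1 unfolding letter_edges_def by auto
  next
    case 2
    have "m = Suc u \<or> Suc u < m" using u by linarith
    then have "u = r - 1" using 2 r by auto
    then show ?thesis
      using ac horizontal(1) index(1) touching 2 r(1) unfolding letter_edges_def by auto
  qed
qed

lemma state_loops_remove_closed_loop:
  assumes r: "0 < r" "r < length ls" and horizontal: "bs ! (r - 1)" "bs ! r"
    and index: "fst (ls ! (r - 1)) = i" "fst (ls ! r) = i" "1 \<le> i" "Suc i \<le> n"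
  shows "state_loops n ls bs =
    card ((state_nodes n ls - {(r, i), (r, Suc i)}) // component_rel (state_edges n ls bs)) + 1"
proof -
  let ?E = "state_edges n ls bs" and ?C = "{(r, i), (r, Suc i)}"
  have "y \<in> ?C" if "((r, i), y) \<in> (?E \<union> ?E\<inverse>)\<^sup>*" for y
    using that
  proof (induction rule: rtrancl_induct)
    case (step y w)
    then show ?case
      using state_edges_touching_cap[OF assms(1-6), of y w] state_edges_touching_cap[OF assms(1-6), of w y]
      by auto
  qed simp
  moreover have "((r, i), (r, Suc i)) \<in> ?E"
    using r horizontal(2) index(2) unfolding state_edges_eq letter_edges_def by auto
  ultimately have "component_rel ?E `` {(r, i)} = ?C"
    unfolding component_rel_def by auto
  moreover have "?C \<subseteq> state_nodes n ls" "finite (state_nodes n ls)"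
    using r index unfolding state_nodes_def by auto
  ultimately show ?thesis
    unfolding state_loops_eq
    using card_quotient_remove_class[OF equiv_component_rel, of "state_nodes n ls" "(r, i)"] by auto
qed

lemma state_loops_delete_horizontal_pair:
  assumes lengths: "length bA = length A" "length bB = length B"
    and valid: "valid_letters n (A @ z # B)"
    and previous: "A \<noteq> []" "last bA" "fst (last A) = fst z"
  shows "state_loops n (A @ z # B) (bA @ True # bB) = state_loops n (A @ B) (bA @ bB) + 1"
proof -
  define ls bs m r i where "ls = A @ z # B" and "bs = bA @ True # bB"
    and "m = length ls" and "r = length A" and "i = fst z"
  define s V C where "s = Suc r mod m" and "V = state_nodes n ls" and "C = {(r, i), (r, Suc i)}"
  define \<Phi> :: "nat \<times> nat \<Rightarrow> nat \<times> nat" where "\<Phi> = apfst (merge_level m r)"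
  define E E' where "E = state_edges n ls bs" and "E' = state_edges n (A @ B) (bA @ bB)"
  have r: "0 < r" "r < m" using previous(1) unfolding r_def m_def ls_def by simp_all
  have "bA \<noteq> []" using lengths(1) previous(1) by auto
  then have at: "bs ! (r - 1)" "bs ! r" "fst (ls ! (r - 1)) = i" "fst (ls ! r) = i"
    using lengths previous r(1) unfolding bs_def ls_def r_def i_def
    by (simp_all add: nth_append last_conv_nth)
  have i: "1 \<le> i" "Suc i \<le> n" using valid unfolding i_def by simp_all
  have "m = Suc r \<or> Suc r < m" using r by linarith
  then have s: "s \<noteq> r" "s < m" using r unfolding s_def by auto
  have split: "E = other_letter_edges n ls bs r \<union> letter_edges n i True r s"
    using state_edges_split[of r ls n bs] r at unfolding E_def m_def s_def by simp
  have nodes: "V = {0..<m} \<times> {1..n}" "state_nodes n (A @ B) = {0..<max 1 (m - 1)} \<times> {1..n}"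
    unfolding V_def state_nodes_def m_def ls_def by simp_all
  have merged: "\<Phi> (s, p) = \<Phi> (r, p)" for p
    unfolding \<Phi>_def s_def using merge_level_Suc[OF r(2)] by simp
  have image: "(\<Phi> a, \<Phi> c) \<in> E'" if "(a, c) \<in> other_letter_edges n ls bs r" for a c
    using that unfolding \<Phi>_def E'_def m_def r_def ls_def bs_def
    by (rule state_edges_delete_letter_image[OF lengths])
  have "((r, i), (r, Suc i)) \<in> other_letter_edges n ls bs r"
    using r at unfolding other_letter_edges_def letter_edges_def m_def
    by (auto intro!: bexI[of _ "r - 1"])
  then have cap: "(\<Phi> (r, i), \<Phi> (r, Suc i)) \<in> E'" by (rule image)
  have "card ((V - C) // component_rel E) = card (state_nodes n (A @ B) // component_rel E')"
  proof (rule card_components_eq_if_map)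
    show "\<Phi> ` (V - C) = state_nodes n (A @ B)"
      unfolding nodes \<Phi>_def C_def using r i by (intro apfst_merge_level_image_diff) auto
  next
    fix a c assume "(a, c) \<in> E"
    then consider "(a, c) \<in> other_letter_edges n ls bs r" | p where "a = (r, p)" "c = (s, p)"
      | "(a, c) = ((r, i), (r, Suc i))" | "(a, c) = ((s, i), (s, Suc i))"
      unfolding split letter_edges_def if_True by blast
    then show "(\<Phi> a, \<Phi> c) \<in> component_rel E'"
    proof cases
      case 1
      then show ?thesis by (intro component_rel_edge(1) image)
    next
      case 2
      then show ?thesis using merged by simp
    next
      case 3
      then show ?thesis using cap by (simp add: component_rel_edge)
    next
      case 4
      then show ?thesis using cap merged by (simp add: component_rel_edge)
    qed
  next
    fix u v assume "(u, v) \<in> E'"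
    from state_edges_delete_letter_lift[OF lengths valid this[unfolded E'_def], of True]
    obtain a c where ac: "(a, c) \<in> other_letter_edges n ls bs r" "a \<in> V" "c \<in> V" "u = \<Phi> a" "v = \<Phi> c"
      unfolding \<Phi>_def V_def m_def r_def ls_def bs_def .
    then have "(a, c) \<in> E" using other_letter_edges_subset unfolding E_def by blast
    show "\<exists>a\<in>V - C. \<exists>b\<in>V - C. \<Phi> a = u \<and> \<Phi> b = v \<and> (a, b) \<in> component_rel E"
    proof (cases "a \<in> C \<or> c \<in> C")
      case True
      \<comment> \<open>only the cap at level \<open>r\<close> touches \<open>C\<close>; its twin at level \<open>s\<close> has the same image\<close>
      then have "(a, c) = ((r, i), (r, Suc i))"
        using state_edges_touching_cap[OF r(1) r(2)[unfolded m_def] at] \<open>(a, c) \<in> E\<close>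
        unfolding C_def E_def by blast
      moreover have "((s, i), (s, Suc i)) \<in> E" unfolding split letter_edges_def by simp
      moreover have "(s, i) \<in> V - C" "(s, Suc i) \<in> V - C"
        using s i unfolding nodes C_def by auto
      ultimately show ?thesis
        using ac(4,5) merged component_rel_edge(1)[of "(s, i)" "(s, Suc i)" E] by auto
    next
      case False
      then show ?thesis
        using ac \<open>(a, c) \<in> E\<close> component_rel_edge(1)[of a c E] by auto
    qed
  next
    fix a c assume a: "a \<in> V - C" and c: "c \<in> V - C" and eq: "\<Phi> a = \<Phi> c"
    show "(a, c) \<in> component_rel E"
    proof (cases "a = c")
      case False
      with a c eq have ac: "{a, c} = {(r, snd a), (s, snd a)}"
        unfolding nodes \<Phi>_def s_def by (intro apfst_merge_level_eq[OF r(2)]) auto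
      with a c have "snd a \<in> {1..n} - {i, Suc i}"
        unfolding nodes C_def doubleton_eq_iff by auto
      then have "((r, snd a), (s, snd a)) \<in> E" unfolding split letter_edges_def by auto
      with ac show ?thesis by (rule component_rel_if_doubleton_edge[rotated])
    qed simp
  qed
  then show ?thesis
    using state_loops_remove_closed_loop[OF r(1) r(2)[unfolded m_def] at i]
    unfolding state_loops_eq E_def E'_def V_def C_def ls_def bs_def by simp
qed

section \<open>State sums with letter weights\<close>

definition smoothing_weight :: "bool \<Rightarrow> real \<times> real \<Rightarrow> real" where
  "smoothing_weight b w = (if b then snd w else fst w)"

definition state_sum :: "nat \<Rightarrow> real \<Rightarrow> (nat \<times> int) list \<Rightarrow> (real \<times> real) list \<Rightarrow> real" where
  "state_sum n d ls ws = (\<Sum>bs\<in>{bs. length bs = length ls}.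
      prod_list (map2 smoothing_weight bs ws) * d ^ (state_loops n ls bs - 1))"

lemma sum_lists_length_append:
  "(\<Sum>xs\<in>{xs. length xs = a + c}. f xs) =
    (\<Sum>x\<in>{x. length x = a}. \<Sum>y\<in>{y. length y = c}. f (x @ y))"
proof -
  have inj: "inj_on (\<lambda>(x, y). x @ y) ({x. length x = a} \<times> {y. length y = c})"
    by (auto simp: inj_on_def)
  have eq: "{xs. length xs = a + c} = (\<lambda>(x, y). x @ y) ` ({x. length x = a} \<times> {y. length y = c})"
  proof (intro equalityI subsetI)
    fix xs assume "xs \<in> {xs. length xs = a + c}"
    then show "xs \<in> (\<lambda>(x, y). x @ y) ` ({x. length x = a} \<times> {y. length y = c})"
      by (intro image_eqI[of _ _ "(take a xs, drop a xs)"]) auto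
  qed auto
  have "(\<Sum>xs\<in>{xs. length xs = a + c}. f xs) =
      sum (f \<circ> (\<lambda>(x, y). x @ y)) ({x. length x = a} \<times> {y. length y = c})"
    unfolding eq by (rule sum.reindex[OF inj])
  then show ?thesis
    unfolding sum.cartesian_product by (simp add: comp_def case_prod_unfold)
qed

lemma sum_bool_lists_length_Suc:
  "(\<Sum>xs\<in>{xs. length xs = Suc c}. f xs) =
    (\<Sum>xs\<in>{xs. length xs = c}. f (True # xs) + f (False # xs))"
proof -
  have "{x :: bool list. length x = 1} = {[True], [False]}" by (auto simp: length_Suc_conv)
  then show ?thesis
    using sum_lists_length_append[of f 1 c] by (simp add: sum.distrib)
qed

lemma sum_bool_lists_length_insert:
  "(\<Sum>xs\<in>{xs. length xs = a + Suc c}. f xs) =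
    (\<Sum>x\<in>{x. length x = a}. \<Sum>y\<in>{y. length y = c}. f (x @ True # y) + f (x @ False # y))"
  unfolding sum_lists_length_append by (simp add: sum_bool_lists_length_Suc)

lemma sum_lists_prod_nth:
  fixes f :: "nat \<Rightarrow> 'j \<Rightarrow> 'a::comm_semiring_1"
  shows "(\<Sum>js\<in>{js. set js \<subseteq> J \<and> length js = k}. \<Prod>t<k. f t (js ! t)) = (\<Prod>t<k. \<Sum>j\<in>J. f t j)"
proof (induction k arbitrary: f)
  case 0
  have "{js. set js \<subseteq> J \<and> length js = 0} = {[]}" by auto
  then show ?case by simp
next
  case (Suc k)
  let ?S = "{js. set js \<subseteq> J \<and> length js = k}"
  have inj: "inj_on (\<lambda>(js, j). j # js) (?S \<times> J)" by (auto simp: inj_on_def)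
  have "(\<Sum>js\<in>{js. set js \<subseteq> J \<and> length js = Suc k}. \<Prod>t<Suc k. f t (js ! t)) =
      (\<Sum>(js, j)\<in>?S \<times> J. \<Prod>t<Suc k. f t ((j # js) ! t))"
    unfolding lists_length_Suc_eq sum.reindex[OF inj] by (simp add: comp_def case_prod_unfold)
  also have "\<dots> = (\<Sum>js\<in>?S. \<Sum>j\<in>J. f 0 j * (\<Prod>t<k. f (Suc t) (js ! t)))"
    unfolding sum.cartesian_product[symmetric]
    by (simp add: prod.lessThan_Suc_shift del: prod.lessThan_Suc)
  also have "\<dots> = (\<Sum>j\<in>J. f 0 j) * (\<Sum>js\<in>?S. \<Prod>t<k. f (Suc t) (js ! t))"
    unfolding sum_product by (rule sum.swap)
  also have "\<dots> = (\<Prod>t<Suc k. \<Sum>j\<in>J. f t j)"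
    unfolding Suc.IH[of "\<lambda>t. f (Suc t)"] by (simp add: prod.lessThan_Suc_shift del: prod.lessThan_Suc)
  finally show ?case .
qed

lemma prod_list_map2_eq_prod_nth:
  "length xs = length ys \<Longrightarrow> prod_list (map2 f xs ys) = (\<Prod>t<length xs. f (xs ! t) (ys ! t))"
proof (induction xs arbitrary: ys)
  case (Cons x xs)
  then obtain y ys' where "ys = y # ys'" by (cases ys) auto
  with Cons show ?case by (simp add: prod.lessThan_Suc_shift del: prod.lessThan_Suc)
qed simp

lemma state_sum_eq_prod_nth:
  "length ws = length ls \<Longrightarrow> state_sum n d ls ws = (\<Sum>bs\<in>{bs. length bs = length ls}.
    (\<Prod>t<length ls. smoothing_weight (bs ! t) (ws ! t)) * d ^ (state_loops n ls bs - 1))"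
  unfolding state_sum_def by (intro sum.cong refl) (simp add: prod_list_map2_eq_prod_nth)

lemma state_sum_multilinear:
  assumes "length ws = length ls"
    and weights: "\<And>t b. t < length ls \<Longrightarrow>
      smoothing_weight b (ws ! t) = (\<Sum>j\<in>J. p t j * smoothing_weight b (W j))"
  shows "state_sum n d ls ws = (\<Sum>js\<in>{js. set js \<subseteq> J \<and> length js = length ls}.
    (\<Prod>t<length ls. p t (js ! t)) * state_sum n d ls (map W js))"
proof -
  let ?k = "length ls" and ?JS = "{js. set js \<subseteq> J \<and> length js = length ls}"
  let ?D = "\<lambda>bs. d ^ (state_loops n ls bs - 1)"
  have "state_sum n d ls ws = (\<Sum>bs\<in>{bs. length bs = ?k}.
      (\<Sum>js\<in>?JS. \<Prod>t<?k. p t (js ! t) * smoothing_weight (bs ! t) (W (js ! t))) * ?D bs)"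
    unfolding state_sum_eq_prod_nth[OF assms(1)]
  proof (intro sum.cong refl arg_cong2[where f = "(*)"])
    fix bs :: "bool list"
    show "(\<Prod>t<?k. smoothing_weight (bs ! t) (ws ! t)) =
        (\<Sum>js\<in>?JS. \<Prod>t<?k. p t (js ! t) * smoothing_weight (bs ! t) (W (js ! t)))"
      unfolding sum_lists_prod_nth[of "\<lambda>t j. p t j * smoothing_weight (bs ! t) (W j)"]
      by (simp add: weights)
  qed
  also have "\<dots> = (\<Sum>js\<in>?JS. (\<Prod>t<?k. p t (js ! t)) * (\<Sum>bs\<in>{bs. length bs = ?k}.
      (\<Prod>t<?k. smoothing_weight (bs ! t) (W (js ! t))) * ?D bs))"
    unfolding sum_distrib_right sum_distrib_left prod.distrib mult.assoc by (rule sum.swap)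
  also have "\<dots> = (\<Sum>js\<in>?JS. (\<Prod>t<?k. p t (js ! t)) * state_sum n d ls (map W js))"
    by (intro sum.cong refl arg_cong2[where f = "(*)"]) (simp add: state_sum_eq_prod_nth)
  finally show ?thesis .
qed

lemma state_sum_cong_fst:
  assumes "map fst ls = map fst ls'"
  shows "state_sum n d ls ws = state_sum n d ls' ws"
proof -
  have "length ls = length ls'" using assms by (metis length_map)
  then show ?thesis unfolding state_sum_def state_loops_cong_fst[OF assms] by simp
qed

lemma state_sum_delete_vertical:
  assumes lengths: "length wA = length A" "length wB = length B"
    and valid: "valid_letters n (A @ z # B)"
  shows "state_sum n d (A @ z # B) (wA @ (v, 0) # wB) = v * state_sum n d (A @ B) (wA @ wB)"
proof -
  let ?f = "\<lambda>bs. prod_list (map2 smoothing_weight bs (wA @ (v, 0) # wB)) *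
    d ^ (state_loops n (A @ z # B) bs - 1)"
  let ?g = "\<lambda>bs. prod_list (map2 smoothing_weight bs (wA @ wB)) * d ^ (state_loops n (A @ B) bs - 1)"
  have "state_sum n d (A @ z # B) (wA @ (v, 0) # wB) =
      (\<Sum>x\<in>{x. length x = length A}. \<Sum>y\<in>{y. length y = length B}.
        ?f (x @ True # y) + ?f (x @ False # y))"
    unfolding state_sum_def using sum_bool_lists_length_insert[of ?f "length A" "length B"] by simp
  also have "\<dots> = (\<Sum>x\<in>{x. length x = length A}. \<Sum>y\<in>{y. length y = length B}. v * ?g (x @ y))"
    using state_loops_delete_vertical[OF _ _ valid] lengths
    by (intro sum.cong refl) (simp add: zip_append smoothing_weight_def)
  also have "\<dots> = v * state_sum n d (A @ B) (wA @ wB)"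
    unfolding state_sum_def length_append sum_lists_length_append sum_distrib_left ..
  finally show ?thesis .
qed

text \<open>Horizontal smoothings of two consecutive letters on the same strands enclose an extra loop;
  this is the factor \<open>d\<close> in the horizontal component.\<close>

definition weight_mult :: "real \<Rightarrow> real \<times> real \<Rightarrow> real \<times> real \<Rightarrow> real \<times> real" where
  "weight_mult d w w' = (fst w * fst w', fst w * snd w' + snd w * fst w' + snd w * snd w' * d)"

lemma state_sum_merge:
  assumes lengths: "length wA = length A" "length wB = length B"
    and valid: "valid_letters n (A @ x # y # B)" and same: "fst y = fst x" and "1 \<le> n"
  shows "state_sum n d (A @ x # y # B) (wA @ w # w' # wB) =
    state_sum n d (A @ x # B) (wA @ weight_mult d w w' # wB)"
proof -
  let ?L = "state_loops n (A @ x # B)"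
  let ?f = "\<lambda>bs. prod_list (map2 smoothing_weight bs (wA @ w # w' # wB)) *
      d ^ (state_loops n (A @ x # y # B) bs - 1)"
  let ?g = "\<lambda>bs. prod_list (map2 smoothing_weight bs (wA @ weight_mult d w w' # wB)) * d ^ (?L bs - 1)"
  have "state_sum n d (A @ x # y # B) (wA @ w # w' # wB) =
      (\<Sum>a\<in>{a. length a = length A}. \<Sum>b\<in>{b. length b = length B}.
        ?f (a @ True # True # b) + ?f (a @ False # True # b) +
        (?f (a @ True # False # b) + ?f (a @ False # False # b)))"
    unfolding state_sum_def using sum_bool_lists_length_insert[of ?f "length A" "Suc (length B)"]
    by (simp add: sum_bool_lists_length_Suc)
  also have "\<dots> = (\<Sum>a\<in>{a. length a = length A}. \<Sum>b\<in>{b. length b = length B}.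
      ?g (a @ True # b) + ?g (a @ False # b))"
  proof (intro sum.cong refl)
    fix a b :: "bool list" assume "a \<in> {a. length a = length A}" "b \<in> {b. length b = length B}"
    then have ab: "length a = length A" "length b = length B" by auto
    have fst_eq: "map fst (A @ y # B) = map fst (A @ x # B)" using same by simp
    have "state_loops n (A @ x # y # B) (a @ False # c # b) = ?L (a @ c # b)" for c
      using state_loops_delete_vertical[of a A "c # b" "y # B" n x] ab valid
      by (simp add: state_loops_cong_fst[OF fst_eq])
    moreover have "state_loops n (A @ x # y # B) (a @ True # False # b) = ?L (a @ True # b)"
      using state_loops_delete_vertical[of "a @ [True]" "A @ [x]" b B n y] ab valid by simp
    moreover have "state_loops n (A @ x # y # B) (a @ True # True # b) = Suc (?L (a @ True # b))"
      using state_loops_delete_horizontal_pair[of "a @ [True]" "A @ [x]" b B n y] ab valid same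
      by simp
    moreover obtain l where "?L (a @ True # b) = Suc l"
      using state_loops_ge_1[OF \<open>1 \<le> n\<close>, of "A @ x # B" "a @ True # b"]
      by (cases "?L (a @ True # b)") auto
    ultimately show "?f (a @ True # True # b) + ?f (a @ False # True # b) +
        (?f (a @ True # False # b) + ?f (a @ False # False # b)) =
      ?g (a @ True # b) + ?g (a @ False # b)"
      using ab lengths by (simp add: zip_append smoothing_weight_def weight_mult_def algebra_simps)
  qed
  also have "\<dots> = state_sum n d (A @ x # B) (wA @ weight_mult d w w' # wB)"
    unfolding state_sum_def using sum_bool_lists_length_insert[of ?g "length A" "length B"] by simp
  finally show ?thesis .
qed

fun weight_pow :: "real \<Rightarrow> real \<times> real \<Rightarrow> nat \<Rightarrow> real \<times> real" where
  "weight_pow d w 0 = (1, 0)"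
| "weight_pow d w (Suc r) = weight_mult d w (weight_pow d w r)"

lemma state_sum_block:
  assumes "length wA = length A" "length wB = length B" "valid_letters n (A @ (i, 1) # B)" "1 \<le> n"
  shows "state_sum n d (A @ replicate r (i, e) @ B) (wA @ replicate r w @ wB) =
    state_sum n d (A @ (i, 1) # B) (wA @ weight_pow d w r # wB)"
  using assms
proof (induction r arbitrary: A wA)
  case 0
  then show ?case using state_sum_delete_vertical[of wA A wB B n "(i, 1)" d 1] by simp
next
  case (Suc r)
  have "state_sum n d (A @ replicate (Suc r) (i, e) @ B) (wA @ replicate (Suc r) w @ wB) =
      state_sum n d ((A @ [(i, e)]) @ replicate r (i, e) @ B) ((wA @ [w]) @ replicate r w @ wB)"
    by simp
  also have "\<dots> = state_sum n d ((A @ [(i, e)]) @ (i, 1) # B) ((wA @ [w]) @ weight_pow d w r # wB)"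
    using Suc.prems by (intro Suc.IH) auto
  also have "\<dots> = state_sum n d (A @ (i, e) # B) (wA @ weight_pow d w (Suc r) # wB)"
    using Suc.prems by (simp add: state_sum_merge)
  also have "\<dots> = state_sum n d (A @ (i, 1) # B) (wA @ weight_pow d w (Suc r) # wB)"
    by (simp add: state_sum_cong_fst)
  finally show ?case .
qed

section \<open>The Jones polynomial as a state sum\<close>

text \<open>The sign \<open>(-1) powi e\<close> is the letter's share of the writhe factor in \<open>jones_braid\<close>.\<close>

definition letter_weight :: "real \<Rightarrow> int \<Rightarrow> real \<times> real" where
  "letter_weight s e = ((-1) powi e * s powi e, (-1) powi e * s powi (2 * e))"

lemma prod_minus_one_powi:
  fixes f :: "nat \<Rightarrow> int" shows "(\<Prod>t<m. (-1::real) powi f t) = (-1) powi (\<Sum>t<m. f t)"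
  by (induction m) (simp_all add: power_int_add)

lemma jones_braid_eq_state_sum:
  "jones_braid n w s =
    state_sum n (- s - inverse s) (braid_letters w) (map (letter_weight s \<circ> snd) (braid_letters w))"
proof -
  let ?ls = "braid_letters w"
  let ?wt = "\<lambda>bs t. if bs ! t then s powi (2 * snd (?ls ! t)) else s powi (snd (?ls ! t))"
  have "smoothing_weight b (letter_weight s e) = (-1) powi e * (if b then s powi (2 * e) else s powi e)"
    for b e by (simp add: smoothing_weight_def letter_weight_def)
  then have "(\<Prod>t<length ?ls. smoothing_weight (bs ! t) (map (letter_weight s \<circ> snd) ?ls ! t)) =
      (-1) powi (\<Sum>t<length ?ls. snd (?ls ! t)) * (\<Prod>t<length ?ls. ?wt bs t)" for bs
    by (simp add: prod.distrib prod_minus_one_powi)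
  then show ?thesis
    unfolding jones_braid_def Let_def by (simp add: state_sum_eq_prod_nth sum_distrib_left mult.assoc)
qed

definition block_weight :: "real \<Rightarrow> int \<Rightarrow> real \<times> real" where
  "block_weight s a = weight_pow (- s - inverse s) (letter_weight s (sgn a)) (nat \<bar>a\<bar>)"

lemma state_sum_word:
  assumes "length wA = length A" "length wB = length B" "valid_letters n A" "valid_letters n B"
    "valid_letters n (map (\<lambda>p. (fst p, 1)) w)" "1 \<le> n"
  shows "state_sum n (- s - inverse s) (A @ braid_letters w @ B)
      (wA @ map (letter_weight s \<circ> snd) (braid_letters w) @ wB) =
    state_sum n (- s - inverse s) (A @ map (\<lambda>p. (fst p, 1)) w @ B)
      (wA @ map (block_weight s \<circ> snd) w @ wB)"
  using assms
proof (induction w arbitrary: A wA)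
  case Nil
  then show ?case by (simp add: braid_letters_def)
next
  case (Cons p w)
  obtain i a where p: "p = (i, a)" by fastforce
  have "valid_letters n (map (\<lambda>p. (fst p, 1)) w) \<Longrightarrow> valid_letters n (braid_letters w)" for w
    by (induction w) (auto simp: braid_letters_def valid_letters_def)
  then have valid: "valid_letters n (A @ (i, 1) # braid_letters w @ B)"
    using Cons.prems p by simp
  let ?d = "- s - inverse s"
  have "state_sum n ?d (A @ braid_letters (p # w) @ B)
      (wA @ map (letter_weight s \<circ> snd) (braid_letters (p # w)) @ wB) =
    state_sum n ?d (A @ replicate (nat \<bar>a\<bar>) (i, sgn a) @ (braid_letters w @ B))
      (wA @ replicate (nat \<bar>a\<bar>) (letter_weight s (sgn a)) @
        (map (letter_weight s \<circ> snd) (braid_letters w) @ wB))"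
    by (simp add: p braid_letters_def)
  also have "\<dots> = state_sum n ?d ((A @ [(i, 1)]) @ braid_letters w @ B)
      ((wA @ [block_weight s a]) @ map (letter_weight s \<circ> snd) (braid_letters w) @ wB)"
    using Cons.prems valid by (subst state_sum_block) (auto simp: block_weight_def)
  also have "\<dots> = state_sum n ?d ((A @ [(i, 1)]) @ map (\<lambda>p. (fst p, 1)) w @ B)
      ((wA @ [block_weight s a]) @ map (block_weight s \<circ> snd) w @ wB)"
    using Cons.prems p by (intro Cons.IH) auto
  finally show ?case using p by (simp add: comp_def)
qed

lemma jones_braid_eq_state_sum_blocks:
  assumes "length ix = length as" "\<forall>t<length ix. 1 \<le> ix ! t \<and> ix ! t \<le> n - 1" "2 \<le> n"
  shows "jones_braid n (zip ix as) s =
    state_sum n (- s - inverse s) (map (\<lambda>i. (i, 1)) ix) (map (block_weight s) as)"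
proof -
  have "valid_letters n (map (\<lambda>i. (i, 1)) ix)"
    unfolding valid_letters_def
  proof
    fix x assume "x \<in> set (map (\<lambda>i. (i, 1::int)) ix)"
    then obtain t where "t < length ix" "x = (ix ! t, 1)" by (auto simp: in_set_conv_nth)
    then show "1 \<le> fst x \<and> Suc (fst x) \<le> n" using assms(2,3) by force
  qed
  moreover have "map (\<lambda>p. (fst p, 1)) (zip ix as) = map (\<lambda>i. (i, 1::int)) (map fst (zip ix as))"
    "map (block_weight s \<circ> snd) (zip ix as) = map (block_weight s) (map snd (zip ix as))"
    by simp_all
  ultimately show ?thesis
    unfolding jones_braid_eq_state_sum
    using state_sum_word[of "[]" "[]" "[]" "[]" n "zip ix as" s] assms(1,3)
    by (simp add: map_fst_zip map_snd_zip)
qed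

section \<open>The weights of a block\<close>

lemma weight_pow_closed_form:
  fixes u d :: real
  assumes ud: "u * d = -1 - u^2"
  shows "weight_pow d (-u, -(u^2)) r = ((-u)^r, -u * (u^(3*r) - (-u)^r) / (u^2 + 1))"
proof (induction r)
  case (Suc r)
  define X Y where "X = u^(3*r)" and "Y = (-u)^r"
  define H where "H = -u * (X - Y) / (u^2 + 1)"
  have pos: "u^2 + 1 \<noteq> 0" using zero_le_power2[of u] by linarith
  have step: "(-u) * H + (-(u^2)) * Y + (-(u^2)) * H * d = u^3 * H - u^2 * Y"
  proof -
    have "(-(u^2)) * H * d = - H * u * (u * d)" by (simp add: power2_eq_square)
    also have "\<dots> = H * u + H * u^3"
      unfolding ud by (simp add: algebra_simps power3_eq_cube power2_eq_square)
    finally show ?thesis by (simp add: algebra_simps)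
  qed
  have H: "u^3 * H - u^2 * Y = -u * (u^3 * X - (-u) * Y) / (u^2 + 1)"
    unfolding H_def using pos by (simp add: field_simps power3_eq_cube power2_eq_square)
  have X: "u^(3 * Suc r) = u^3 * X" unfolding X_def by (simp add: power_add)
  have "weight_pow d (-u, -(u^2)) (Suc r) = weight_mult d (-u, -(u^2)) (Y, H)"
    using Suc by (simp add: X_def Y_def H_def)
  also have "\<dots> = ((-u) * Y, u^3 * H - u^2 * Y)" unfolding weight_mult_def using step by simp
  also have "\<dots> = ((-u)^Suc r, -u * (u^(3 * Suc r) - (-u)^Suc r) / (u^2 + 1))"
    unfolding H X by (simp add: Y_def)
  finally show ?case .
qed simp

text \<open>The closed form rewritten in terms of \<open>s\<close>, for either \<open>u = s\<close> or \<open>u = 1/s\<close>; both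
  satisfy the two hypotheses.\<close>

lemma weight_pow_eq_P_form:
  fixes u d s :: real
  assumes ud: "u * d = -1 - u^2" and s0: "s \<noteq> 0" and us: "u / (u^2 + 1) = s / (s^2 + 1)"
    and p0: "p0 = u^(3*r) + (-1)^r * u^r * s^2" and p1: "p1 = (u^(3*r) - (-1)^r * u^r) / s"
  shows "weight_pow d (-u, -(u^2)) r = ((p0 - s * p1) / (s^2 + 1), -(s^2) * p1 / (s^2 + 1))"
proof -
  have pos: "s^2 + 1 \<noteq> 0" "u^2 + 1 \<noteq> 0"
    using zero_le_power2[of s] zero_le_power2[of u] by linarith+
  define X Y where "X = u^(3*r)" and "Y = (-1)^r * u^r"
  have "s * ((X - Y) / s) = X - Y" using s0 by simp
  then have "p0 - s * p1 = Y * (s^2 + 1)"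
    unfolding p0 p1 X_def[symmetric] Y_def[symmetric] by (simp add: algebra_simps)
  then have fst: "(p0 - s * p1) / (s^2 + 1) = (-1)^r * u^r"
    using pos by (simp add: Y_def)
  have "-(s^2) * ((X - Y) / s) = -(X - Y) * s" using s0 by (simp add: power2_eq_square field_simps)
  then have "-(s^2) * p1 = -(X - Y) * s" unfolding p1 X_def[symmetric] Y_def[symmetric] .
  then have snd: "-(s^2) * p1 / (s^2 + 1) = -(u^(3*r) - (-1)^r * u^r) * (s / (s^2 + 1))"
    unfolding X_def Y_def by simp
  show ?thesis
    unfolding weight_pow_closed_form[OF ud] fst snd us[symmetric] power_minus[of u r]
    using pos by (simp add: field_simps)
qed

lemma P0_P1_of_nat:
  fixes s :: real
  assumes "s \<noteq> 0"
  shows "P0 (int r) s = s^(3*r) + (-1)^r * s^r * s^2"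
    and "P1 (int r) s = (s^(3*r) - (-1)^r * s^r) / s"
proof -
  have "3 * int r = int (3 * r)" "int r + 2 = int (r + 2)" by simp_all
  then show "P0 (int r) s = s^(3*r) + (-1)^r * s^r * s^2"
    unfolding P0_def by (simp only: power_int_of_nat) (simp add: power_add power2_eq_square)
  have "s powi (3 * int r) = s^(3*r)" using power_int_of_nat[of s "3 * r"] by simp
  then have "s powi (3 * int r - 1) = s^(3*r) / s" "s powi (int r - 1) = s^r / s"
    using assms by (simp_all add: power_int_diff)
  moreover have "(-1::real) powi (int r + 1) = - ((-1)^r)" by (simp add: power_int_add)
  ultimately show "P1 (int r) s = (s^(3*r) - (-1)^r * s^r) / s"
    unfolding P1_def using assms by (simp add: field_simps)
qed

lemma P0_P1_of_neg:
  fixes s :: real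
  assumes "s \<noteq> 0"
  shows "P0 (- int r) s = inverse s^(3*r) + (-1)^r * inverse s^r * s^2"
    and "P1 (- int r) s = (inverse s^(3*r) - (-1)^r * inverse s^r) / s"
proof -
  have pow: "s powi (- int k) = inverse s^k" for k by (simp add: power_int_minus power_inverse)
  have sign: "(-1::real) powi (- int r) = (-1)^r" by (cases "even r") (simp_all add: power_int_minus)
  have "s powi (- int r + 2) = inverse s^r * s^2"
    using assms pow[of r] power_int_add[of s "- int r" 2] by simp
  then show "P0 (- int r) s = inverse s^(3*r) + (-1)^r * inverse s^r * s^2"
    unfolding P0_def using pow[of "3 * r"] sign by simp
  have "3 * - int r = - int (3 * r)" by simp
  moreover have "s powi (- int (3 * r) - 1) = inverse s^(3*r) / s" "s powi (- int r - 1) = inverse s^r / s"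
    using assms pow[of "3 * r"] pow[of r] by (simp_all add: power_int_diff)
  moreover have "(-1::real) powi (- int r + 1) = - ((-1)^r)"
    using sign power_int_add[of "-1::real" "- int r" 1] by simp
  ultimately show "P1 (- int r) s = (inverse s^(3*r) - (-1)^r * inverse s^r) / s"
    unfolding P1_def by (simp add: diff_divide_distrib)
qed

lemma block_weight_eq:
  fixes s :: real
  assumes s0: "s \<noteq> 0"
  shows "block_weight s a = ((P0 a s - s * P1 a s) / (s^2 + 1), -(s^2) * P1 a s / (s^2 + 1))"
proof (cases "0 \<le> a")
  case True
  define r where "r = nat a"
  have a: "a = int r" using True unfolding r_def by simp
  have "block_weight s a = weight_pow (- s - inverse s) (-s, -(s^2)) r"
  proof (cases "r = 0")
    case False
    then have "sgn a = 1" unfolding a by simp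
    then show ?thesis unfolding block_weight_def a by (simp add: letter_weight_def)
  qed (simp add: a block_weight_def)
  also have "\<dots> = ((P0 a s - s * P1 a s) / (s^2 + 1), -(s^2) * P1 a s / (s^2 + 1))"
  proof (rule weight_pow_eq_P_form)
    show "s * (- s - inverse s) = -1 - s^2" using s0 by (simp add: field_simps power2_eq_square)
  qed (simp_all add: s0 a P0_P1_of_nat[OF s0])
  finally show ?thesis .
next
  case False
  define r u where "r = nat (- a)" and "u = inverse s"
  have a: "a = - int r" "0 < r" using False unfolding r_def by simp_all
  have pos: "s^2 + 1 \<noteq> 0" using zero_le_power2[of s] by linarith
  have "block_weight s a = weight_pow (- s - inverse s) (- u, -(u^2)) r"
    unfolding block_weight_def a u_def using a(2)
    by (simp add: letter_weight_def power_int_minus power2_eq_square power_inverse)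
  also have "\<dots> = ((P0 a s - s * P1 a s) / (s^2 + 1), -(s^2) * P1 a s / (s^2 + 1))"
  proof (rule weight_pow_eq_P_form)
    show "u * (- s - inverse s) = -1 - u^2" using s0 by (simp add: u_def field_simps power2_eq_square)
    show "u / (u^2 + 1) = s / (s^2 + 1)" using s0 pos by (simp add: u_def field_simps power2_eq_square)
  qed (simp_all add: s0 a u_def P0_P1_of_neg[OF s0])
  finally show ?thesis .
qed

lemma block_weight_decompose:
  fixes s :: real
  assumes "s \<noteq> 0"
  shows "smoothing_weight b (block_weight s a) =
    (\<Sum>j\<in>{0, 1}. Pj a j s / (s^2 + 1) * smoothing_weight b (block_weight s (int j)))"
proof -
  have "s^2 + 1 \<noteq> 0" using zero_le_power2[of s] by linarith
  moreover have "block_weight s 0 = (1, 0)" "block_weight s 1 = (-s, -(s^2))"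
    by (simp_all add: block_weight_def weight_mult_def letter_weight_def power2_eq_square)
  ultimately show ?thesis
    unfolding block_weight_eq[OF assms, of a] Pj_def smoothing_weight_def
    by (simp add: diff_divide_distrib)
qed

theorem theorem1p2:
  fixes n k :: nat and ix :: "nat list" and as :: "int list" and s :: real
  assumes "n \<ge> 2" and "k \<ge> 1"
    and "length ix = k" and "length as = k"
    and "\<forall>t<k. 1 \<le> ix ! t \<and> ix ! t \<le> n - 1"
    and "s \<noteq> 0"
  shows "jones_braid n (zip ix as) s =
    (1 / (s\<^sup>2 + 1) ^ k) *
    (\<Sum>js \<in> {js :: nat list. length js = k \<and> set js \<subseteq> {0, 1}}.
       (\<Prod>t<k. Pj (as ! t) (js ! t) s) * jones_braid n (zip ix (map int js)) s)"
proof -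
  let ?d = "- s - inverse s" and ?L = "map (\<lambda>i. (i, 1::int)) ix" and ?c = "s\<^sup>2 + 1"
  let ?JS = "{js :: nat list. length js = k \<and> set js \<subseteq> {0, 1}}"
  have blocks: "jones_braid n (zip ix bs) s = state_sum n ?d ?L (map (block_weight s) bs)"
    if "length bs = k" for bs
    using jones_braid_eq_state_sum_blocks[of ix bs n s] that assms(1,3,5) by simp
  have weights: "smoothing_weight b (map (block_weight s) as ! t) =
      (\<Sum>j\<in>{0, 1}. Pj (as ! t) j s / ?c * smoothing_weight b ((block_weight s \<circ> int) j))"
    if "t < length ?L" for t b
    using that assms(3,4) block_weight_decompose[OF assms(6), of b "as ! t"] by simp
  have "jones_braid n (zip ix as) s = (\<Sum>js\<in>{js. set js \<subseteq> {0, 1} \<and> length js = length ?L}.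
      (\<Prod>t<length ?L. Pj (as ! t) (js ! t) s / ?c) * state_sum n ?d ?L (map (block_weight s \<circ> int) js))"
    unfolding blocks[OF assms(4)]
    by (rule state_sum_multilinear[OF _ weights]) (simp_all add: assms(3,4))
  also have "\<dots> = 1 / ?c ^ k *
      (\<Sum>js\<in>?JS. (\<Prod>t<k. Pj (as ! t) (js ! t) s) * jones_braid n (zip ix (map int js)) s)"
    unfolding sum_distrib_left
  proof (rule sum.cong)
    show "{js. set js \<subseteq> {0, 1} \<and> length js = length ?L} = ?JS" using assms(3) by auto
  qed (use assms(3) in \<open>simp add: blocks prod_dividef\<close>)
  finally show ?thesis .
qed

end
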